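(* Let $F \in \mathbb{C}^{n \times n}$ be a unitary matrix with $|F_{ij}|^2 \leq \frac{c}{n}$ for all $i,j$ (for some constant $c>0$), let $I\in\mathbb{C}^{n\times n}$ be the identity, and let $A = [F \enspace I] \in \mathbb{C}^{n \times 2n}$. Let $1 \leq k,t \leq n$ be integers, let $\hat{x}\in\mathbb{C}^n$, let $e \in \mathbb{C}^n$ be $t$-sparse, and let $y = F\hat{x} + e$. Define $$\delta_{k,t} = \sqrt{\frac{ckt}{n}}, \quad \beta = \sqrt{\frac{\max\{k,t\}c}{n}}, \quad \theta = \frac{\sqrt{k+t}}{1- \delta_{k,t}}\beta, \quad \tau = \frac{\sqrt{1 + \delta_{k,t}}}{1 - \delta_{k,t}}.$$ If $0 < \delta_{k,t} < 1$ and $0 < \theta < 1$, then for any solution $x^{\#}$ of the Basis Pursuit problem $\min_{z \in \mathbb{C}^{2n}} \|z\|_1$ subject to $\|Az - y\|_2 \leq \|\hat{x}_{t(k)}\|_2$, writing $x^{\#} = [\hat{x}^{\#} \enspace e^{\#}]^T$ with $\hat{x}^{\#}, e^{\#}\in\mathbb{C}^n$, we have $$\|\hat{x}^{\#} - \hat{x}_{h(k)}\|_2 \leq \left(\frac{2\tau \sqrt{k+t}}{1-\theta} \left(1 + \frac{\beta}{1 - \delta_{k,t}} \right) + 2 \tau \right)\|\hat{x}_{t(k)}\|_2 .$$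
   Context: A vector is $t$-sparse if it has at most $t$ nonzero entries. For $x \in \mathbb{C}^n$, $x_{h(k)}$ denotes a $k$-sparse vector consisting of $k$ largest (in absolute value) entries of $x$ with all other entries zero, and $x_{t(k)} := x - x_{h(k)}$. *)

theory Defs
  imports "HOL-Analysis.Analysis"
begin

definition cnj_transpose :: "complex^'n^'m \<Rightarrow> complex^'m^'n" where
  "cnj_transpose F = (\<chi> i j. cnj (F $ j $ i))"

definition unitary_mat :: "complex^'n^'n \<Rightarrow> bool" where
  "unitary_mat F \<longleftrightarrow> F ** cnj_transpose F = mat 1 \<and> cnj_transpose F ** F = mat 1"

text \<open>l1 norm of a complex vector; the l2 norm is the library norm on complex^'n.\<close>
definition l1norm :: "complex^'n \<Rightarrow> real" where
  "l1norm x = (\<Sum>i\<in>UNIV. cmod (x $ i))"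

definition sparse :: "nat \<Rightarrow> complex^'n \<Rightarrow> bool" where
  "sparse t x \<longleftrightarrow> card {i. x $ i \<noteq> 0} \<le> t"

definition is_head :: "nat \<Rightarrow> complex^'n \<Rightarrow> complex^'n \<Rightarrow> bool" where
  "is_head k x xh \<longleftrightarrow> (\<exists>S. card S = k \<and>
      (\<forall>i. xh $ i = (if i \<in> S then x $ i else 0)) \<and>
      (\<forall>i\<in>S. \<forall>j. j \<notin> S \<longrightarrow> cmod (x $ j) \<le> cmod (x $ i)))"

text \<open>z = [u; v] in C^{2n}, A = [F I], so A z = F u + v and ||z||_1 = ||u||_1 + ||v||_1.
  (u,v) solves min ||z||_1 s.t. ||A z - y||_2 \<le> eta.\<close>
definition is_BP_solution :: "complex^'n^'n \<Rightarrow> complex^'n \<Rightarrow> real \<Rightarrow> complex^'n \<Rightarrow> complex^'n \<Rightarrow> bool" where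
  "is_BP_solution F y eta u v \<longleftrightarrow>
     norm (F *v u + v - y) \<le> eta \<and>
     (\<forall>u' v'. norm (F *v u' + v' - y) \<le> eta \<longrightarrow> l1norm u + l1norm v \<le> l1norm u' + l1norm v')"

end

theory Submission
  imports Defs
begin

(*
  Write the Basis Pursuit error as (u, v) = (xs - xh, es - e). The pair (xh, e) is feasible (F is
  unitary, so its residual is exactly eta = norm (xhat - xh)) and supported on S x T with
  card S = k, card T <= t. Hence l1-minimality of (xs, es) puts (u, v) in the cone where the l1 mass
  off S x T is at most the mass on it, and the triangle inequality gives norm (F u + v) <= 2 eta.

  Incoherence, |F_ij| <= sqrt (c / n), bounds the inner product of F p and q by sqrt (c / n) times
  the l1 norms of p and q. For the head part x = F u_S + v_T this makes norm x ^ 2 equal to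
  N ^ 2 = norm u_S ^ 2 + norm v_T ^ 2 up to a factor 1 +- delta, and its inner product with the
  tail part y = F u_S' + v_T' is at most beta N times the tail l1 mass, which the cone bounds by
  sqrt (k + t) N. Expanding norm x ^ 2 = <x, x + y> - <x, y> yields
  (1 - delta - beta sqrt (k + t)) N <= sqrt (1 + delta) norm (F u + v), and
  norm u <= (1 + sqrt (k + t)) N; the stated constant is this bound written with theta and tau.
*)

definition restrict_vec :: "'n set \<Rightarrow> complex^'n \<Rightarrow> complex^'n" where
  "restrict_vec S x = (\<chi> i. if i \<in> S then x $ i else 0)"

lemma restrict_vec_add_compl: "restrict_vec S x + restrict_vec (- S) x = x"
  by (simp add: restrict_vec_def vec_eq_iff)

lemma restrict_vec_idem: "restrict_vec S (restrict_vec S x) = restrict_vec S x"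
  by (simp add: restrict_vec_def vec_eq_iff)

lemma inner_restrict_vec_compl: "inner (restrict_vec S x) (restrict_vec (- S) y) = 0"
  unfolding restrict_vec_def inner_vec_def by (intro sum.neutral) auto

lemma sum_restrict_vec:
  assumes "f 0 = 0"
  shows "(\<Sum>i\<in>UNIV. f (restrict_vec S x $ i)) = (\<Sum>i\<in>S. f (x $ i))"
  by (simp add: restrict_vec_def if_distrib[of f] sum.If_cases assms)

lemma l1norm_nonneg: "0 \<le> l1norm x"
  unfolding l1norm_def by (simp add: sum_nonneg)

lemma norm_le_l1norm: "norm x \<le> l1norm x"
  unfolding l1norm_def norm_vec_def by (rule L2_set_le_sum) simp

lemma l1norm_restrict_vec_le:
  assumes "card S \<le> k"
  shows "l1norm (restrict_vec S x) \<le> sqrt k * norm (restrict_vec S x)"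
proof -
  have "(l1norm (restrict_vec S x))\<^sup>2 = (\<Sum>i\<in>S. 1 * cmod (x $ i))\<^sup>2"
    unfolding l1norm_def sum_restrict_vec[of cmod, simplified] by simp
  also have "\<dots> \<le> card S * (\<Sum>i\<in>S. (cmod (x $ i))\<^sup>2)"
    using Cauchy_Schwarz_ineq_sum[of "\<lambda>_. 1" "\<lambda>i. cmod (x $ i)" S] by simp
  also have "\<dots> \<le> k * (\<Sum>i\<in>S. (cmod (x $ i))\<^sup>2)"
    using assms by (intro mult_right_mono sum_nonneg) auto
  also have "\<dots> = (sqrt k * norm (restrict_vec S x))\<^sup>2"
    unfolding norm_vec_def L2_set_def sum_restrict_vec[of "\<lambda>z. (cmod z)\<^sup>2", simplified]
    by (simp add: power_mult_distrib sum_nonneg)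
  finally show ?thesis
    by (rule power2_le_imp_le) simp
qed

lemma unitary_mat_cinner:
  assumes "unitary_mat F"
  shows "(\<Sum>i\<in>UNIV. (F *v p) $ i * cnj ((F *v q) $ i)) = (\<Sum>j\<in>UNIV. p $ j * cnj (q $ j))"
proof -
  have columns: "(\<Sum>i\<in>UNIV. cnj (F $ i $ l) * F $ i $ j) = (if l = j then 1 else 0)" for l j
  proof -
    have "(cnj_transpose F ** F) $ l $ j = mat 1 $ l $ j"
      using assms unfolding unitary_mat_def by simp
    then show ?thesis by (simp add: matrix_matrix_mult_def cnj_transpose_def mat_def)
  qed
  have "(\<Sum>i\<in>UNIV. (F *v p) $ i * cnj ((F *v q) $ i))
      = (\<Sum>i\<in>UNIV. \<Sum>l\<in>UNIV. \<Sum>j\<in>UNIV. p $ j * cnj (q $ l) * (cnj (F $ i $ l) * F $ i $ j))"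
    by (simp add: matrix_vector_mult_def sum_distrib_left sum_distrib_right cnj_sum mult_ac)
  also have "\<dots> = (\<Sum>l\<in>UNIV. \<Sum>i\<in>UNIV. \<Sum>j\<in>UNIV. p $ j * cnj (q $ l) * (cnj (F $ i $ l) * F $ i $ j))"
    by (rule sum.swap)
  also have "\<dots> = (\<Sum>l\<in>UNIV. \<Sum>j\<in>UNIV. \<Sum>i\<in>UNIV. p $ j * cnj (q $ l) * (cnj (F $ i $ l) * F $ i $ j))"
    by (rule sum.cong[OF refl], rule sum.swap)
  also have "\<dots> = (\<Sum>l\<in>UNIV. \<Sum>j\<in>UNIV. p $ j * cnj (q $ l) * (if l = j then 1 else 0))"
    by (simp add: sum_distrib_left[symmetric] columns)
  also have "\<dots> = (\<Sum>j\<in>UNIV. p $ j * cnj (q $ j))"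
    by (simp add: if_distrib cong: if_cong)
  finally show ?thesis .
qed

lemma unitary_mat_inner:
  assumes "unitary_mat F"
  shows "inner (F *v p) (F *v q) = inner p q"
proof -
  have inner_eq: "inner x y = Re (\<Sum>i\<in>UNIV. x $ i * cnj (y $ i))" for x y :: "complex^'n"
    by (simp add: inner_vec_def inner_complex_def Re_sum)
  show ?thesis
    unfolding inner_eq unitary_mat_cinner[OF assms] ..
qed

lemma unitary_mat_norm:
  assumes "unitary_mat F"
  shows "norm (F *v p) = norm p"
  using unitary_mat_inner[OF assms] by (simp add: norm_eq_sqrt_inner)

lemma abs_inner_matrix_vector_le:
  fixes F :: "complex^'n^'m"
  assumes "\<forall>i j. cmod (F $ i $ j) \<le> mu"
  shows "\<bar>inner (F *v p) q\<bar> \<le> mu * l1norm p * l1norm q"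
proof -
  have entry: "cmod ((F *v p) $ i) \<le> mu * l1norm p" for i
  proof -
    have "cmod ((F *v p) $ i) \<le> (\<Sum>j\<in>UNIV. cmod (F $ i $ j) * cmod (p $ j))"
      unfolding matrix_vector_mult_def vec_lambda_beta by (rule order_trans[OF norm_sum]) (simp add: norm_mult)
    also have "\<dots> \<le> (\<Sum>j\<in>UNIV. mu * cmod (p $ j))"
      using assms by (intro sum_mono mult_right_mono) auto
    finally show ?thesis
      unfolding l1norm_def by (simp add: sum_distrib_left)
  qed
  have "\<bar>inner (F *v p) q\<bar> \<le> (\<Sum>i\<in>UNIV. cmod ((F *v p) $ i) * cmod (q $ i))"
    unfolding inner_vec_def by (rule order_trans[OF sum_abs sum_mono]) (rule Cauchy_Schwarz_ineq2)
  also have "\<dots> \<le> (\<Sum>i\<in>UNIV. mu * l1norm p * cmod (q $ i))"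
    using entry by (intro sum_mono mult_right_mono) auto
  finally show ?thesis
    unfolding l1norm_def by (simp add: sum_distrib_left)
qed

lemma norm_add_squared_bounds:
  fixes p q :: "'a::real_inner"
  assumes "\<bar>inner p q\<bar> \<le> d * norm p * norm q" and "0 \<le> d"
  shows "(1 - d) * ((norm p)\<^sup>2 + (norm q)\<^sup>2) \<le> (norm (p + q))\<^sup>2"
    and "(norm (p + q))\<^sup>2 \<le> (1 + d) * ((norm p)\<^sup>2 + (norm q)\<^sup>2)"
proof -
  have sum: "(norm (p + q))\<^sup>2 = (norm p)\<^sup>2 + (norm q)\<^sup>2 + 2 * inner p q"
    by (simp add: power2_norm_eq_inner inner_add_left inner_add_right inner_commute)
  have "2 * (d * norm p * norm q) \<le> d * ((norm p)\<^sup>2 + (norm q)\<^sup>2)"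
    using mult_left_mono[OF sum_squares_bound[of "norm p" "norm q"] \<open>0 \<le> d\<close>] by (simp add: mult_ac)
  with assms(1) sum show "(1 - d) * ((norm p)\<^sup>2 + (norm q)\<^sup>2) \<le> (norm (p + q))\<^sup>2"
    and "(norm (p + q))\<^sup>2 \<le> (1 + d) * ((norm p)\<^sup>2 + (norm q)\<^sup>2)"
    by (auto simp: algebra_simps abs_le_iff)
qed

lemma norm_add_ge_of_inner_small:
  fixes x y :: "'a::real_inner"
  assumes lower: "(1 - d) * N\<^sup>2 \<le> (norm x)\<^sup>2" and upper: "norm x \<le> r * N"
    and cross: "\<bar>inner x y\<bar> \<le> e * N\<^sup>2" and "0 \<le> N" "0 \<le> r"
  shows "(1 - d - e) * N \<le> r * norm (x + y)"
proof (cases "N = 0")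
  case True
  then show ?thesis using \<open>0 \<le> r\<close> by simp
next
  case False
  have "(1 - d) * N\<^sup>2 \<le> inner x (x + y) - inner x y"
    using lower by (simp add: power2_norm_eq_inner inner_add_right)
  also have "\<dots> \<le> norm x * norm (x + y) + e * N\<^sup>2"
    using norm_cauchy_schwarz[of x "x + y"] cross by linarith
  also have "\<dots> \<le> r * N * norm (x + y) + e * N\<^sup>2"
    using upper by (simp add: mult_right_mono)
  finally have "N * ((1 - d - e) * N) \<le> N * (r * norm (x + y))"
    by (simp add: power2_eq_square algebra_simps)
  with False \<open>0 \<le> N\<close> show ?thesis by simp
qed

lemma sqrt_mult_add_le:
  fixes a b x y :: real
  assumes "0 \<le> a" "0 \<le> b"
  shows "sqrt a * x + sqrt b * y \<le> sqrt (a + b) * sqrt (x\<^sup>2 + y\<^sup>2)"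
proof -
  have "(sqrt a * x + sqrt b * y)\<^sup>2 + (sqrt a * y - sqrt b * x)\<^sup>2 = (a + b) * (x\<^sup>2 + y\<^sup>2)"
    using assms by (simp add: power2_eq_square algebra_simps)
  then have "(sqrt a * x + sqrt b * y)\<^sup>2 \<le> (sqrt (a + b) * sqrt (x\<^sup>2 + y\<^sup>2))\<^sup>2"
    using assms by (simp add: power_mult_distrib) (metis le_add_same_cancel1 zero_le_power2)
  then show ?thesis
    by (rule power2_le_imp_le) (simp add: assms)
qed

definition l1_cone :: "'n set \<Rightarrow> 'n set \<Rightarrow> complex^'n \<Rightarrow> complex^'n \<Rightarrow> bool" where
  "l1_cone S T u v \<longleftrightarrow>
     l1norm (restrict_vec (- S) u) + l1norm (restrict_vec (- T) v)
       \<le> l1norm (restrict_vec S u) + l1norm (restrict_vec T v)"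

lemma l1norm_add_ge:
  assumes "restrict_vec S z = z"
  shows "l1norm z - l1norm (restrict_vec S h) + l1norm (restrict_vec (- S) h) \<le> l1norm (z + h)"
proof -
  have "cmod (z $ i) - cmod (restrict_vec S h $ i) + cmod (restrict_vec (- S) h $ i)
      \<le> cmod ((z + h) $ i)" for i
  proof (cases "i \<in> S")
    case True
    then show ?thesis using norm_diff_ineq[of "z $ i" "h $ i"] by (simp add: restrict_vec_def)
  next
    case False
    have "z $ i = restrict_vec S z $ i" using assms by simp
    with False show ?thesis by (simp add: restrict_vec_def)
  qed
  then show ?thesis
    unfolding l1norm_def sum_subtractf[symmetric] sum.distrib[symmetric] by (rule sum_mono)
qed

lemma l1_cone_of_l1norm_le:
  assumes "restrict_vec S z = z" "restrict_vec T w = w"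
    and "l1norm (z + u) + l1norm (w + v) \<le> l1norm z + l1norm w"
  shows "l1_cone S T u v"
  unfolding l1_cone_def using l1norm_add_ge[OF assms(1), of u] l1norm_add_ge[OF assms(2), of v] assms(3) by linarith

lemma l1_cone_norm_bounds:
  assumes "l1_cone S T u v" "card S \<le> k" "card T \<le> t"
  defines "N \<equiv> sqrt ((norm (restrict_vec S u))\<^sup>2 + (norm (restrict_vec T v))\<^sup>2)"
  shows "l1norm (restrict_vec (- S) u) + l1norm (restrict_vec (- T) v) \<le> sqrt (k + t) * N"
    and "norm u \<le> (1 + sqrt (k + t)) * N"
proof -
  have "l1norm (restrict_vec S u) + l1norm (restrict_vec T v)
      \<le> sqrt k * norm (restrict_vec S u) + sqrt t * norm (restrict_vec T v)"
    using l1norm_restrict_vec_le assms(2,3) by (meson add_mono)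
  also have "\<dots> \<le> sqrt (k + t) * N"
    unfolding N_def using sqrt_mult_add_le[of k t] by simp
  finally show tail: "l1norm (restrict_vec (- S) u) + l1norm (restrict_vec (- T) v) \<le> sqrt (k + t) * N"
    using assms(1) unfolding l1_cone_def by linarith
  have head: "norm (restrict_vec S u) \<le> N"
    unfolding N_def by (rule real_le_rsqrt) simp
  have "norm u \<le> norm (restrict_vec S u) + norm (restrict_vec (- S) u)"
    using norm_triangle_ineq[of "restrict_vec S u" "restrict_vec (- S) u"]
    by (simp add: restrict_vec_add_compl)
  also have "\<dots> \<le> N + l1norm (restrict_vec (- S) u) + l1norm (restrict_vec (- T) v)"
    using head norm_le_l1norm[of "restrict_vec (- S) u"] l1norm_nonneg[of "restrict_vec (- T) v"]
    by linarith
  finally show "norm u \<le> (1 + sqrt (k + t)) * N"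
    using tail by (simp add: algebra_simps)
qed

lemma restricted_isometry_bounds:
  fixes F :: "complex^'n^'n" and u v :: "complex^'n"
  assumes unitary: "unitary_mat F" and entries: "\<forall>i j. cmod (F $ i $ j) \<le> mu"
    and card: "card S \<le> k" "card T \<le> t" and d: "mu * sqrt k * sqrt t \<le> d"
  defines "N \<equiv> sqrt ((norm (restrict_vec S u))\<^sup>2 + (norm (restrict_vec T v))\<^sup>2)"
  shows "(1 - d) * N\<^sup>2 \<le> (norm (F *v restrict_vec S u + restrict_vec T v))\<^sup>2"
    and "norm (F *v restrict_vec S u + restrict_vec T v) \<le> sqrt (1 + d) * N"
proof -
  define a where "a = restrict_vec S u"
  define w where "w = restrict_vec T v"
  have mu: "0 \<le> mu" using entries norm_ge_zero order_trans by blast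
  have d0: "0 \<le> d" using d mu by (meson mult_nonneg_nonneg order_trans real_sqrt_ge_zero of_nat_0_le_iff)
  have "\<bar>inner (F *v a) w\<bar> \<le> mu * l1norm a * l1norm w"
    by (rule abs_inner_matrix_vector_le[OF entries])
  also have "\<dots> \<le> mu * (sqrt k * norm a) * (sqrt t * norm w)"
    using l1norm_restrict_vec_le[OF card(1), of u] l1norm_restrict_vec_le[OF card(2), of v] mu
    unfolding a_def w_def by (intro mult_mono mult_left_mono) (auto simp: l1norm_nonneg)
  also have "\<dots> \<le> d * norm (F *v a) * norm w"
    using mult_right_mono[OF d, of "norm a * norm w"] by (simp add: unitary_mat_norm[OF unitary] mult_ac)
  finally have "\<bar>inner (F *v a) w\<bar> \<le> d * norm (F *v a) * norm w" .
  from norm_add_squared_bounds[OF this d0]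
  have lower: "(1 - d) * N\<^sup>2 \<le> (norm (F *v a + w))\<^sup>2"
    and upper: "(norm (F *v a + w))\<^sup>2 \<le> (1 + d) * N\<^sup>2"
    by (auto simp: N_def a_def w_def unitary_mat_norm[OF unitary])
  show "(1 - d) * N\<^sup>2 \<le> (norm (F *v a + w))\<^sup>2"
    by (fact lower)
  have "0 \<le> N" unfolding N_def by simp
  with upper show "norm (F *v a + w) \<le> sqrt (1 + d) * N"
    using real_le_rsqrt by (fastforce simp: real_sqrt_mult)
qed

lemma abs_inner_head_tail_le:
  fixes F :: "complex^'n^'n" and u v :: "complex^'n"
  assumes unitary: "unitary_mat F" and entries: "\<forall>i j. cmod (F $ i $ j) \<le> mu"
    and card: "card S \<le> k" "card T \<le> t" and b: "mu * sqrt k \<le> b" "mu * sqrt t \<le> b"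
  defines "N \<equiv> sqrt ((norm (restrict_vec S u))\<^sup>2 + (norm (restrict_vec T v))\<^sup>2)"
  shows "\<bar>inner (F *v restrict_vec S u + restrict_vec T v) (F *v restrict_vec (- S) u + restrict_vec (- T) v)\<bar>
    \<le> b * N * (l1norm (restrict_vec (- S) u) + l1norm (restrict_vec (- T) v))"
proof -
  define a where "a = restrict_vec S u"
  define a' where "a' = restrict_vec (- S) u"
  define w where "w = restrict_vec T v"
  define w' where "w' = restrict_vec (- T) v"
  have mu: "0 \<le> mu" using entries norm_ge_zero order_trans by blast
  have b0: "0 \<le> b" using b(1) mu by (meson mult_nonneg_nonneg order_trans real_sqrt_ge_zero of_nat_0_le_iff)
  have l1_le: "mu * l1norm (restrict_vec R x) \<le> b * N"
    if "card R \<le> r" "mu * sqrt r \<le> b" "norm (restrict_vec R x) \<le> N" for R r x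
  proof -
    have "mu * l1norm (restrict_vec R x) \<le> mu * sqrt r * norm (restrict_vec R x)"
      using mult_left_mono[OF l1norm_restrict_vec_le[OF that(1)] mu] by (simp add: mult.assoc)
    also have "\<dots> \<le> b * N"
      using that(2,3) b0 by (intro mult_mono) auto
    finally show ?thesis .
  qed
  have "norm a \<le> N" "norm w \<le> N"
    unfolding N_def a_def w_def by (auto intro: real_le_rsqrt)
  then have l1a: "mu * l1norm a \<le> b * N" and l1w: "mu * l1norm w \<le> b * N"
    unfolding a_def w_def using l1_le card b by blast+
  have "inner (F *v a + w) (F *v a' + w') = inner (F *v a) w' + inner (F *v a') w"
    using inner_restrict_vec_compl[of S u u] inner_restrict_vec_compl[of T v v]
    unfolding a_def a'_def w_def w'_def
    by (simp add: unitary_mat_inner[OF unitary] inner_add_left inner_add_right inner_commute)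
  also have "\<bar>\<dots>\<bar> \<le> \<bar>inner (F *v a) w'\<bar> + \<bar>inner (F *v a') w\<bar>"
    by (rule abs_triangle_ineq)
  also have "\<dots> \<le> mu * l1norm a * l1norm w' + mu * l1norm a' * l1norm w"
    by (intro add_mono abs_inner_matrix_vector_le[OF entries])
  also have "\<dots> \<le> b * N * (l1norm a' + l1norm w')"
    using mult_right_mono[OF l1a l1norm_nonneg[of w']] mult_right_mono[OF l1w l1norm_nonneg[of a']]
    by (simp add: algebra_simps)
  finally show ?thesis
    unfolding a_def a'_def w_def w'_def .
qed

lemma l1_cone_residual_lower_bound:
  fixes F :: "complex^'n^'n"
  assumes "unitary_mat F" "\<forall>i j. cmod (F $ i $ j) \<le> mu"
    and cone: "l1_cone S T u v" and card: "card S \<le> k" "card T \<le> t"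
    and b: "mu * sqrt k \<le> b" "mu * sqrt t \<le> b" and d: "mu * sqrt k * sqrt t \<le> d"
  defines "N \<equiv> sqrt ((norm (restrict_vec S u))\<^sup>2 + (norm (restrict_vec T v))\<^sup>2)"
  shows "(1 - d - b * sqrt (k + t)) * N \<le> sqrt (1 + d) * norm (F *v u + v)"
proof -
  define x where "x = F *v restrict_vec S u + restrict_vec T v"
  define y where "y = F *v restrict_vec (- S) u + restrict_vec (- T) v"
  have mu: "0 \<le> mu" using assms(2) norm_ge_zero order_trans by blast
  have "0 \<le> b" using b(1) mu by (meson mult_nonneg_nonneg order_trans real_sqrt_ge_zero of_nat_0_le_iff)
  have "0 \<le> d" using d mu by (meson mult_nonneg_nonneg order_trans real_sqrt_ge_zero of_nat_0_le_iff)
  have "0 \<le> N" unfolding N_def by simp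
  with \<open>0 \<le> b\<close> have cross: "\<bar>inner x y\<bar> \<le> b * sqrt (k + t) * N\<^sup>2"
    using abs_inner_head_tail_le[OF assms(1,2) card b, of u v, folded N_def x_def y_def]
      mult_left_mono[OF l1_cone_norm_bounds(1)[OF cone card, folded N_def], of "b * N"]
    by (simp add: power2_eq_square mult_ac)
  have "F *v u + v
      = F *v (restrict_vec S u + restrict_vec (- S) u) + (restrict_vec T v + restrict_vec (- T) v)"
    by (simp only: restrict_vec_add_compl)
  then have "F *v u + v = x + y"
    unfolding x_def y_def matrix_vector_right_distrib by (simp add: add_ac)
  then show ?thesis
    using norm_add_ge_of_inner_small[OF restricted_isometry_bounds[OF assms(1,2) card d, of u v, folded N_def x_def]
        cross \<open>0 \<le> N\<close>] \<open>0 \<le> d\<close> by simp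
qed

lemma l1_cone_norm_le_residual:
  fixes F :: "complex^'n^'n"
  assumes "unitary_mat F" "\<forall>i j. cmod (F $ i $ j) \<le> mu"
    and "l1_cone S T u v" "card S \<le> k" "card T \<le> t"
    and "mu * sqrt k \<le> b" "mu * sqrt t \<le> b" "mu * sqrt k * sqrt t \<le> d"
    and "b * sqrt (k + t) < 1 - d"
  shows "norm u \<le> (1 + sqrt (k + t)) * sqrt (1 + d) / (1 - d - b * sqrt (k + t)) * norm (F *v u + v)"
proof -
  define N where "N = sqrt ((norm (restrict_vec S u))\<^sup>2 + (norm (restrict_vec T v))\<^sup>2)"
  have "N \<le> sqrt (1 + d) * norm (F *v u + v) / (1 - d - b * sqrt (k + t))"
    using l1_cone_residual_lower_bound[OF assms(1-8), folded N_def] assms(9)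
    by (simp add: pos_le_divide_eq mult.commute)
  then have "(1 + sqrt (k + t)) * N
      \<le> (1 + sqrt (k + t)) * (sqrt (1 + d) * norm (F *v u + v) / (1 - d - b * sqrt (k + t)))"
    by (rule mult_left_mono) simp
  with l1_cone_norm_bounds(2)[OF assms(3-5), folded N_def] show ?thesis
    by simp
qed

lemma is_BP_solution_error_bound:
  fixes F :: "complex^'n^'n"
  assumes "unitary_mat F" "\<forall>i j. cmod (F $ i $ j) \<le> mu"
    and "card S \<le> k" "restrict_vec S x = x" "card T \<le> t" "restrict_vec T e = e"
    and "mu * sqrt k \<le> b" "mu * sqrt t \<le> b" "mu * sqrt k * sqrt t \<le> d"
    and "b * sqrt (k + t) < 1 - d"
    and feasible: "norm (F *v x + e - y) \<le> \<eta>" and "is_BP_solution F y \<eta> xs es"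
  shows "norm (xs - x) \<le> 2 * ((1 + sqrt (k + t)) * sqrt (1 + d) / (1 - d - b * sqrt (k + t))) * \<eta>"
proof -
  define C where "C = (1 + sqrt (k + t)) * sqrt (1 + d) / (1 - d - b * sqrt (k + t))"
  have residual: "norm (F *v xs + es - y) \<le> \<eta>"
    and "l1norm xs + l1norm es \<le> l1norm x + l1norm e"
    using assms(12) feasible unfolding is_BP_solution_def by auto
  then have "l1_cone S T (xs - x) (es - e)"
    using l1_cone_of_l1norm_le[OF assms(4,6)] by simp
  then have "norm (xs - x) \<le> C * norm (F *v (xs - x) + (es - e))"
    using l1_cone_norm_le_residual[OF assms(1,2) _ assms(3,5,7-10)] unfolding C_def by simp
  also have "\<dots> \<le> C * (2 * \<eta>)"
  proof (rule mult_left_mono)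
    show "norm (F *v (xs - x) + (es - e)) \<le> 2 * \<eta>"
      using residual feasible norm_triangle_ineq4[of "F *v xs + es - y" "F *v x + e - y"]
      by (simp add: matrix_vector_mult_diff_distrib algebra_simps)
    have "0 \<le> mu"
      using assms(2) norm_ge_zero order_trans by blast
    then have "0 \<le> d"
      using assms(9) by (meson mult_nonneg_nonneg order_trans real_sqrt_ge_zero of_nat_0_le_iff)
    then show "0 \<le> C"
      using assms(10) unfolding C_def by simp
  qed
  finally show ?thesis
    unfolding C_def by (simp only: mult_ac)
qed

lemma sqrt_coherence_bounds:
  fixes c n :: real and k t :: nat
  assumes "0 \<le> c / n"
  shows "sqrt (c / n) * sqrt k \<le> sqrt (max k t * c / n)"
    and "sqrt (c / n) * sqrt t \<le> sqrt (max k t * c / n)"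
    and "sqrt (c / n) * sqrt k * sqrt t = sqrt (c * k * t / n)"
proof -
  have "real k * (c / n) \<le> max k t * (c / n)" "real t * (c / n) \<le> max k t * (c / n)"
    using assms by (intro mult_right_mono; simp)+
  then show "sqrt (c / n) * sqrt k \<le> sqrt (max k t * c / n)"
    and "sqrt (c / n) * sqrt t \<le> sqrt (max k t * c / n)"
    by (simp_all add: real_sqrt_mult[symmetric] mult.commute)
  show "sqrt (c / n) * sqrt k * sqrt t = sqrt (c * k * t / n)"
    by (simp add: real_sqrt_mult[symmetric] mult_ac)
qed

lemma error_constant_eq:
  fixes d b s \<theta> \<tau> :: real
  assumes "d < 1" "\<theta> < 1" "\<theta> = s / (1 - d) * b" "\<tau> = sqrt (1 + d) / (1 - d)"
  shows "2 * \<tau> * s / (1 - \<theta>) * (1 + b / (1 - d)) + 2 * \<tau>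
    = 2 * ((1 + s) * sqrt (1 + d) / (1 - d - b * s))"
proof -
  have "s * (1 + b / (1 - d)) = s + \<theta>"
    using assms(1,3) by (simp add: field_simps)
  have "2 * \<tau> * s / (1 - \<theta>) * (1 + b / (1 - d)) + 2 * \<tau>
      = 2 * \<tau> * (s * (1 + b / (1 - d))) / (1 - \<theta>) + 2 * \<tau>"
    by simp
  also have "\<dots> = 2 * \<tau> * (1 + s) / (1 - \<theta>)"
    unfolding \<open>s * (1 + b / (1 - d)) = s + \<theta>\<close> using assms(2) by (simp add: field_simps)
  also have "\<dots> = 2 * ((1 + s) * sqrt (1 + d) / ((1 - d) * (1 - \<theta>)))"
    using assms(4) by simp
  also have "(1 - d) * (1 - \<theta>) = 1 - d - b * s"
    using assms(1,3) by (simp add: field_simps)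
  finally show ?thesis .
qed

theorem theorem2:
  fixes F :: "complex^'n^'n" and c :: real and k t :: nat
    and xhat e xs es xh :: "complex^'n"
  assumes "unitary_mat F"
    and "c > 0"
    and "\<forall>i j. (cmod (F $ i $ j))\<^sup>2 \<le> c / real CARD('n)"
    and "1 \<le> k" "k \<le> CARD('n)" "1 \<le> t" "t \<le> CARD('n)"
    and "sparse t e"
    and "is_head k xhat xh"
    and "0 < sqrt (c * k * t / CARD('n))"
    and "sqrt (c * k * t / CARD('n)) < 1"
    and "0 < sqrt (k + t) / (1 - sqrt (c * k * t / CARD('n))) * sqrt (max k t * c / CARD('n))"
    and "sqrt (k + t) / (1 - sqrt (c * k * t / CARD('n))) * sqrt (max k t * c / CARD('n)) < 1"
    and "is_BP_solution F (F *v xhat + e) (norm (xhat - xh)) xs es"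
  shows "let n = real CARD('n);
             \<delta> = sqrt (c * k * t / n);
             \<beta> = sqrt (max k t * c / n);
             \<theta> = sqrt (k + t) / (1 - \<delta>) * \<beta>;
             \<tau> = sqrt (1 + \<delta>) / (1 - \<delta>)
         in norm (xs - xh) \<le>
            (2 * \<tau> * sqrt (k + t) / (1 - \<theta>) * (1 + \<beta> / (1 - \<delta>)) + 2 * \<tau>) * norm (xhat - xh)"
proof -
  define n where "n = real CARD('n)"
  define \<delta> where "\<delta> = sqrt (c * k * t / n)"
  define \<beta> where "\<beta> = sqrt (max k t * c / n)"
  obtain S where card_S: "card S \<le> k" and xh: "xh = restrict_vec S xhat"
    using assms(9) unfolding is_head_def restrict_vec_def by (auto simp: vec_eq_iff)
  define T where "T = {i. e $ i \<noteq> 0}"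
  have card_T: "card T \<le> t" and e: "restrict_vec T e = e"
    using assms(8) unfolding sparse_def T_def by (auto simp: restrict_vec_def vec_eq_iff)
  have feasible: "norm (F *v xh + e - (F *v xhat + e)) \<le> norm (xhat - xh)"
    using unitary_mat_norm[OF assms(1), of "xh - xhat"]
    by (simp add: matrix_vector_mult_diff_distrib norm_minus_commute)
  have entries: "\<forall>i j. cmod (F $ i $ j) \<le> sqrt (c / n)"
    using assms(3) by (auto simp: n_def intro: real_le_rsqrt)
  have "0 \<le> c / n"
    using assms(2) by (simp add: n_def)
  then have coherence: "sqrt (c / n) * sqrt k \<le> \<beta>" "sqrt (c / n) * sqrt t \<le> \<beta>"
    "sqrt (c / n) * sqrt k * sqrt t \<le> \<delta>"
    unfolding \<beta>_def \<delta>_def using sqrt_coherence_bounds by simp_all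
  have "\<delta> < 1" "\<beta> * sqrt (k + t) < 1 - \<delta>"
    using assms(11,13) by (simp_all add: \<delta>_def \<beta>_def n_def pos_divide_less_eq mult.commute)
  moreover have "restrict_vec S xh = xh"
    by (simp add: xh restrict_vec_idem)
  ultimately have "norm (xs - xh)
      \<le> 2 * ((1 + sqrt (k + t)) * sqrt (1 + \<delta>) / (1 - \<delta> - \<beta> * sqrt (k + t))) * norm (xhat - xh)"
    by (intro is_BP_solution_error_bound[OF assms(1) entries card_S _ card_T e coherence _ feasible assms(14)])
  with error_constant_eq[OF \<open>\<delta> < 1\<close> assms(13)[folded n_def, folded \<delta>_def \<beta>_def] refl refl]
  show ?thesis
    unfolding Let_def n_def[symmetric] \<delta>_def[symmetric] \<beta>_def[symmetric] by simp
qed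

end
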